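(* For all $t\in\mathbb N$ we have $M_t=(0,0,\tfrac12,-\tfrac12,0,0)^T$ and \[ V_{2t}=\frac12\begin{pmatrix}1&1&0&0&0&0\\1&1&0&0&0&0\\1&1&0&0&0&0\\0&0&1&1&0&0\\0&0&1&1&0&0\\0&0&1&1&0&0\end{pmatrix}V_t+\frac14\begin{pmatrix}0\\0\\1\\4\\1\\9\end{pmatrix},\qquad V_{2t+1}=\frac12\begin{pmatrix}0&0&1&1&0&0\\0&0&1&1&0&0\\0&0&1&1&0&0\\0&0&0&0&1&1\\0&0&0&0&1&1\\0&0&0&0&1&1\end{pmatrix}V_t+\frac14\begin{pmatrix}1\\9\\4\\1\\0\\0\end{pmatrix}, \] with $V_0=\frac14(0,0,1,9,6,14)^T$.
   Context: Let $\mathsf r(n)$ be the number of (overlapping) occurrences of $\mathtt{11}$ in the binary expansion of $n\in\mathbb N=\{0,1,\dots\}$, and $d(t,n)=\mathsf r(n+t)-\mathsf r(n)$. Let $a_t(k)$, $b_t(k)$ ($k\in\mathbb Z$) be the asymptotic densities (which exist and define probability distributions on $\mathbb Z$) of $\{n:d(t,2n)=k\}$ and $\{n:d(t,2n+1)=k\}$. Let $m_t^\alpha=\sum_k k a_t(k)$, $m_t^\beta=\sum_k k b_t(k)$, $v_t^\alpha=\sum_k(k-m_t^\alpha)^2a_t(k)$, $v_t^\beta=\sum_k(k-m_t^\beta)^2b_t(k)$, and $M_t=(m^\alpha_{2t},m^\beta_{2t},m^\alpha_{2t+1},m^\beta_{2t+1},m^\alpha_{2t+2},m^\beta_{2t+2})^T$,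 $V_t=(v^\alpha_{2t},v^\beta_{2t},v^\alpha_{2t+1},v^\beta_{2t+1},v^\alpha_{2t+2},v^\beta_{2t+2})^T$. *)

theory Defs
  imports "HOL-Analysis.Analysis"
begin

text \<open>r n = number of (overlapping) occurrences of the block 11 in the binary
  expansion of n: positions i such that bits i and i+1 of n are both 1.\<close>
definition r :: "nat \<Rightarrow> nat" where
  "r n = card {i::nat. (n div 2 ^ i) mod 4 = 3}"

definition d :: "nat \<Rightarrow> nat \<Rightarrow> int" where
  "d t n = int (r (n + t)) - int (r n)"

text \<open>Asymptotic density of a set of naturals (as a limit; existence is
  part of the paper's standing facts).\<close>
definition density :: "nat set \<Rightarrow> real" where
  "density A = lim (\<lambda>N. real (card (A \<inter> {..<N})) / real N)"

definition a :: "nat \<Rightarrow> int \<Rightarrow> real" where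
  "a t k = density {n. d t (2 * n) = k}"

definition b :: "nat \<Rightarrow> int \<Rightarrow> real" where
  "b t k = density {n. d t (2 * n + 1) = k}"

definition m_alpha :: "nat \<Rightarrow> real" where
  "m_alpha t = (\<Sum>\<^sub>\<infinity>k\<in>(UNIV::int set). real_of_int k * a t k)"

definition m_beta :: "nat \<Rightarrow> real" where
  "m_beta t = (\<Sum>\<^sub>\<infinity>k\<in>(UNIV::int set). real_of_int k * b t k)"

definition v_alpha :: "nat \<Rightarrow> real" where
  "v_alpha t = (\<Sum>\<^sub>\<infinity>k\<in>(UNIV::int set). (real_of_int k - m_alpha t)^2 * a t k)"

definition v_beta :: "nat \<Rightarrow> real" where
  "v_beta t = (\<Sum>\<^sub>\<infinity>k\<in>(UNIV::int set). (real_of_int k - m_beta t)^2 * b t k)"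

definition M :: "nat \<Rightarrow> real^6" where
  "M t = vector [m_alpha (2*t), m_beta (2*t), m_alpha (2*t+1), m_beta (2*t+1),
                 m_alpha (2*t+2), m_beta (2*t+2)]"

definition V :: "nat \<Rightarrow> real^6" where
  "V t = vector [v_alpha (2*t), v_beta (2*t), v_alpha (2*t+1), v_beta (2*t+1),
                 v_alpha (2*t+2), v_beta (2*t+2)]"

definition A0 :: "real^6^6" where
  "A0 = vector [vector [1,1,0,0,0,0], vector [1,1,0,0,0,0], vector [1,1,0,0,0,0],
                vector [0,0,1,1,0,0], vector [0,0,1,1,0,0], vector [0,0,1,1,0,0]]"

definition A1 :: "real^6^6" where
  "A1 = vector [vector [0,0,1,1,0,0], vector [0,0,1,1,0,0], vector [0,0,1,1,0,0],
                vector [0,0,0,0,1,1], vector [0,0,0,0,1,1], vector [0,0,0,0,1,1]]"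

end

(*
  Since r (2n) = r n and r (2n+1) = r n + (n mod 2), writing t = 2s or 2s+1 expresses d(t,.) on
  each residue class of n modulo 4 through d(s,.) or d(s+1,.) on a residue class modulo 2, shifted
  by a constant that depends only on parities.  Densities of level sets of interleaved sequences
  average, so each of a_t, b_t is the mean of two translates of a_s, b_s, a_(s+1), b_(s+1).
  Averaging averages moments and translation by c changes them binomially; this gives the means
  and, through variance = second moment - mean^2, the affine recursion for V.  The one
  self-referential instance, b_1 = (a_1 + b_1(. + 1)) / 2, is solved by descending induction on
  the value: b_1 is an explicit geometric distribution, with finite moments.
*)

theory Submission
  imports Defs "HOL-Real_Asymp.Real_Asymp" "HOL-Probability.Characteristic_Functions"
begin

section \<open>Blocks 11 and binary splitting\<close>

lemma finite_eleven_positions: "finite {i. (m div 2 ^ i) mod 4 = (3::nat)}"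
proof (rule finite_subset)
  show "{i. (m div 2 ^ i) mod 4 = 3} \<subseteq> {..<m}"
  proof
    fix i assume "i \<in> {i. (m div 2 ^ i) mod 4 = 3}"
    then have "m div 2 ^ i \<noteq> 0" by auto
    then have "2 ^ i \<le> m" by (simp add: div_eq_0_iff not_less)
    then show "i \<in> {..<m}" using less_exp[of i] by (simp del: less_exp)
  qed
qed simp

lemma eleven_positions_div2:
  "{i. (m div 2 ^ i) mod 4 = 3} =
     (if m mod 4 = 3 then {0} else {}) \<union> Suc ` {i. (m div 2 div 2 ^ i) mod 4 = (3::nat)}"
proof (rule set_eqI)
  fix i show "i \<in> {i. (m div 2 ^ i) mod 4 = 3} \<longleftrightarrow>
      i \<in> (if m mod 4 = 3 then {0} else {}) \<union> Suc ` {i. (m div 2 div 2 ^ i) mod 4 = 3}"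
    by (cases i) (auto simp: div_mult2_eq)
qed

lemma r_div2: "r m = r (m div 2) + (if m mod 4 = 3 then 1 else 0)"
proof -
  let ?S = "Suc ` {i. (m div 2 div 2 ^ i) mod 4 = (3::nat)}"
  have card_S: "card ?S = r (m div 2)"
    unfolding r_def by (rule card_image) simp
  have card_insert_0: "card (insert 0 ?S) = card ?S + 1"
    using finite_eleven_positions[of "m div 2"] by (subst card_insert_disjoint) auto
  have "r m = card ((if m mod 4 = 3 then {0} else {}) \<union> ?S)"
    unfolding r_def[of m] by (rule arg_cong[OF eleven_positions_div2])
  also have "\<dots> = card ?S + (if m mod 4 = 3 then 1 else 0)"
    by (cases "m mod 4 = 3")
      (simp_all only: simp_thms if_True if_False Un_insert_left Un_empty_left card_insert_0 add_0_right)
  finally show ?thesis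
    unfolding card_S .
qed

lemma r_double: "r (2 * n) = r n"
proof -
  have "2 * n mod 4 \<noteq> 3" by presburger
  then show ?thesis using r_div2[of "2 * n"] by simp
qed

lemma r_double_plus1: "r (2 * n + 1) = r n + n mod 2"
proof -
  have "(if (2 * n + 1) mod 4 = 3 then 1 else 0) = n mod 2" by presburger
  moreover have "(2 * n + 1) div 2 = n" by simp
  ultimately show ?thesis using r_div2[of "2 * n + 1"] by (simp only:)
qed

lemma d_even_even: "d (2 * s) (2 * n) = d s n"
  unfolding d_def by (metis distrib_left r_double)

lemma d_even_odd: "d (2 * s) (2 * n + 1) = d s n + int ((n + s) mod 2) - int (n mod 2)"
proof -
  have sum_eq: "2 * n + 1 + 2 * s = 2 * (n + s) + 1" by simp
  show ?thesis unfolding d_def sum_eq r_double_plus1 by simp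
qed

lemma d_odd_even: "d (2 * s + 1) (2 * n) = d s n + int ((n + s) mod 2)"
proof -
  have sum_eq: "2 * n + (2 * s + 1) = 2 * (n + s) + 1" by simp
  show ?thesis unfolding d_def sum_eq r_double_plus1 r_double by simp
qed

lemma d_odd_odd: "d (2 * s + 1) (2 * n + 1) = d (s + 1) n - int (n mod 2)"
proof -
  have sum_eq: "2 * n + 1 + (2 * s + 1) = 2 * (n + (s + 1))" by simp
  show ?thesis unfolding d_def sum_eq r_double_plus1 r_double by simp
qed

section \<open>Asymptotic density\<close>

definition has_density :: "nat set \<Rightarrow> real \<Rightarrow> bool" where
  "has_density A \<delta> \<longleftrightarrow> (\<lambda>N. real (card (A \<inter> {..<N})) / real N) \<longlonglongrightarrow> \<delta>"

lemma density_eqI: "has_density A \<delta> \<Longrightarrow> density A = \<delta>"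
  unfolding has_density_def density_def by (rule limI)

lemma has_density_UNIV: "has_density UNIV 1"
proof -
  have "\<forall>\<^sub>F N in sequentially. real (card (UNIV \<inter> {..<N})) / real N = 1"
    using eventually_gt_at_top[of 0] by eventually_elim simp
  then show ?thesis
    unfolding has_density_def by (rule tendsto_eventually)
qed

lemma has_density_empty: "has_density {} 0"
  unfolding has_density_def by simp

lemma card_Int_lessThan_Suc:
  "card (A \<inter> {..<Suc N}) = card (A \<inter> {..<N}) + (if N \<in> A then 1 else 0)"
proof -
  have "A \<inter> {..<Suc N} = (if N \<in> A then insert N (A \<inter> {..<N}) else A \<inter> {..<N})"
    by (auto simp: less_Suc_eq)
  then show ?thesis by simp
qed

lemma card_Int_lessThan_double:
  fixes A :: "nat set"
  shows "card (A \<inter> {..<2 * N}) = card ({m. 2 * m \<in> A} \<inter> {..<N}) + card ({m. 2 * m + 1 \<in> A} \<inter> {..<N})"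
proof (induction N)
  case (Suc N)
  have "2 * Suc N = Suc (Suc (2 * N))" by simp
  then show ?case using Suc by (simp only: card_Int_lessThan_Suc) simp
qed simp

lemma has_density_interleave:
  assumes "has_density {m. 2 * m \<in> A} \<delta>" and "has_density {m. 2 * m + 1 \<in> A} \<epsilon>"
  shows "has_density A ((\<delta> + \<epsilon>) / 2)"
proof -
  define ratio where "ratio B N = real (card (B \<inter> {..<N})) / real N" for B N
  let ?E = "{m. 2 * m \<in> A}" and ?O = "{m. 2 * m + 1 \<in> A}"
  have E: "ratio ?E \<longlonglongrightarrow> \<delta>" and O: "ratio ?O \<longlonglongrightarrow> \<epsilon>"
    using assms unfolding has_density_def ratio_def by simp_all
  have double: "ratio A (2 * N) = (ratio ?E N + ratio ?O N) / 2" for N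
    unfolding ratio_def card_Int_lessThan_double by (simp add: add_divide_distrib)
  have double_plus1: "ratio A (2 * N + 1) =
      ratio ?E (Suc N) * (real (Suc N) / real (2 * N + 1)) + ratio ?O N * (real N / real (2 * N + 1))" for N
  proof -
    have "card (A \<inter> {..<2 * N + 1}) = card (?E \<inter> {..<Suc N}) + card (?O \<inter> {..<N})"
      using card_Int_lessThan_double[of A N] by (simp add: card_Int_lessThan_Suc)
    moreover have "ratio ?E (Suc N) * (real (Suc N) / real (2 * N + 1)) =
        real (card (?E \<inter> {..<Suc N})) / real (2 * N + 1)"
      unfolding ratio_def by simp
    moreover have "ratio ?O N * (real N / real (2 * N + 1)) = real (card (?O \<inter> {..<N})) / real (2 * N + 1)"
      unfolding ratio_def by (cases "N = 0") auto
    ultimately show ?thesis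
      unfolding ratio_def by (simp add: add_divide_distrib)
  qed
  have "(\<lambda>N. ratio A (2 * N)) \<longlonglongrightarrow> (\<delta> + \<epsilon>) / 2"
    unfolding double by (intro tendsto_intros E O) simp
  moreover have "(\<lambda>N. ratio A (2 * N + 1)) \<longlonglongrightarrow> (\<delta> + \<epsilon>) / 2"
  proof -
    have "(\<lambda>N. real (Suc N) / real (2 * N + 1)) \<longlonglongrightarrow> 1 / 2"
      and "(\<lambda>N. real N / real (2 * N + 1)) \<longlonglongrightarrow> 1 / 2"
      by real_asymp+
    from tendsto_add[OF tendsto_mult[OF LIMSEQ_Suc[OF E] this(1)] tendsto_mult[OF O this(2)]]
    show ?thesis unfolding double_plus1 by (simp add: add_divide_distrib)
  qed
  ultimately have "ratio A \<longlonglongrightarrow> (\<delta> + \<epsilon>) / 2"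
    by (rule limseq_even_odd)
  then show ?thesis
    unfolding has_density_def ratio_def .
qed

section \<open>Distributions of integer sequences\<close>

definition has_distribution :: "(nat \<Rightarrow> int) \<Rightarrow> (int \<Rightarrow> real) \<Rightarrow> bool" where
  "has_distribution f P \<longleftrightarrow> (\<forall>k. has_density {n. f n = k} (P k))"

definition mix :: "(int \<Rightarrow> real) \<Rightarrow> (int \<Rightarrow> real) \<Rightarrow> int \<Rightarrow> real" where
  "mix P Q k = (P k + Q k) / 2"

definition translate :: "int \<Rightarrow> (int \<Rightarrow> real) \<Rightarrow> int \<Rightarrow> real" where
  "translate c P k = P (k - c)"

definition point_mass :: "int \<Rightarrow> int \<Rightarrow> real" where
  "point_mass c k = (if k = c then 1 else 0)"

lemma density_level_sets:
  "has_distribution f P \<Longrightarrow> (\<lambda>k. density {n. f n = k}) = P"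
  unfolding has_distribution_def by (auto intro: density_eqI)

lemma has_distribution_interleave:
  assumes "has_distribution g P" and "has_distribution h Q"
    and "\<And>m. f (2 * m) = g m" and "\<And>m. f (2 * m + 1) = h m"
  shows "has_distribution f (mix P Q)"
  unfolding has_distribution_def mix_def
proof
  fix k
  have "has_density {m. 2 * m \<in> {n. f n = k}} (P k)"
    and "has_density {m. 2 * m + 1 \<in> {n. f n = k}} (Q k)"
    using assms unfolding has_distribution_def by simp_all
  then show "has_density {n. f n = k} ((P k + Q k) / 2)"
    by (rule has_density_interleave)
qed

lemma has_distribution_translate:
  assumes "has_distribution f P"
  shows "has_distribution (\<lambda>n. f n + c) (translate c P)"
  unfolding has_distribution_def translate_def
proof
  fix k
  have "{n. f n + c = k} = {n. f n = k - c}" by auto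
  then show "has_density {n. f n + c = k} (P (k - c))"
    using assms unfolding has_distribution_def by simp
qed

lemma has_distribution_const: "has_distribution (\<lambda>_. c) (point_mass c)"
  unfolding has_distribution_def point_mass_def
  by (auto simp: has_density_UNIV has_density_empty)

lemma has_distribution_descent:
  fixes f :: "nat \<Rightarrow> int"
  assumes bounded: "\<And>n. f n \<le> K"
    and even: "has_distribution (\<lambda>m. f (2 * m)) G"
    and odd: "\<And>m. f (2 * m + 1) = f m - 1"
    and F_above: "\<And>k. K < k \<Longrightarrow> F k = 0"
    and F_rec: "\<And>k. k \<le> K \<Longrightarrow> F k = (G k + F (k + 1)) / 2"
  shows "has_distribution f F"
proof -
  have level: "has_density {n. f n = K + 1 - int j} (F (K + 1 - int j))" for j
  proof (induction j)
    case 0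
    have "f n \<noteq> K + 1" for n using bounded[of n] by linarith
    then have "{n. f n = K + 1} = {}" by blast
    then show ?case using F_above[of "K + 1"] by (simp add: has_density_empty)
  next
    case (Suc j)
    define k where "k = K - int j"
    have "has_density {m. 2 * m \<in> {n. f n = k}} (G k)"
      using even unfolding has_distribution_def by simp
    have odd_level: "{m. 2 * m + 1 \<in> {n. f n = k}} = {n. f n = K + 1 - int j}"
      unfolding mem_Collect_eq odd k_def by auto
    have k_plus1: "k + 1 = K + 1 - int j" by (simp add: k_def)
    have "has_density {m. 2 * m + 1 \<in> {n. f n = k}} (F (k + 1))"
      unfolding odd_level k_plus1 by (rule Suc.IH)
    with \<open>has_density {m. 2 * m \<in> {n. f n = k}} (G k)\<close>
    have "has_density {n. f n = k} ((G k + F (k + 1)) / 2)"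
      by (rule has_density_interleave)
    moreover have "K + 1 - int (Suc j) = k" by (simp add: k_def)
    moreover have "F k = (G k + F (k + 1)) / 2" by (rule F_rec) (simp add: k_def)
    ultimately show ?case by (simp only:)
  qed
  show ?thesis
    unfolding has_distribution_def
  proof
    fix k
    show "has_density {n. f n = k} (F k)"
    proof (cases "K < k")
      case True
      then have "f n \<noteq> k" for n using bounded[of n] by linarith
      then have "{n. f n = k} = {}" by blast
      then show ?thesis using F_above[OF True] by (simp add: has_density_empty)
    next
      case False
      then show ?thesis using level[of "nat (K + 1 - k)"] by simp
    qed
  qed
qed

section \<open>Moments\<close>

definition moment :: "nat \<Rightarrow> (int \<Rightarrow> real) \<Rightarrow> real" where
  "moment j P = (\<Sum>\<^sub>\<infinity>k. real_of_int k ^ j * P k)"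

definition moments_summable :: "nat \<Rightarrow> (int \<Rightarrow> real) \<Rightarrow> bool" where
  "moments_summable n P \<longleftrightarrow> (\<forall>j\<le>n. (\<lambda>k. real_of_int k ^ j * P k) summable_on UNIV)"

lemma has_sum_moment:
  "moments_summable n P \<Longrightarrow> j \<le> n \<Longrightarrow> ((\<lambda>k. real_of_int k ^ j * P k) has_sum moment j P) UNIV"
  unfolding moments_summable_def moment_def by auto

lemma moments_summableI:
  "(\<And>j. j \<le> n \<Longrightarrow> ((\<lambda>k. real_of_int k ^ j * P k) has_sum S j) UNIV) \<Longrightarrow> moments_summable n P"
  unfolding moments_summable_def by (auto dest: has_sum_imp_summable)

lemma moments_summable_mono: "moments_summable n P \<Longrightarrow> j \<le> n \<Longrightarrow> moments_summable j P"
  unfolding moments_summable_def by auto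

lemma has_sum_moment_mix:
  assumes "moments_summable n P" and "moments_summable n Q" and "j \<le> n"
  shows "((\<lambda>k. real_of_int k ^ j * mix P Q k) has_sum (moment j P + moment j Q) / 2) UNIV"
proof -
  have "((\<lambda>k. (1 / 2) * (real_of_int k ^ j * P k + real_of_int k ^ j * Q k))
      has_sum (1 / 2) * (moment j P + moment j Q)) UNIV"
    using assms by (intro has_sum_cmult_right has_sum_add has_sum_moment)
  then show ?thesis
    by (simp add: mix_def algebra_simps add_divide_distrib)
qed

lemma moments_summable_mix:
  "moments_summable n P \<Longrightarrow> moments_summable n Q \<Longrightarrow> moments_summable n (mix P Q)"
  by (rule moments_summableI) (rule has_sum_moment_mix)

lemma moment_mix:
  "moments_summable j P \<Longrightarrow> moments_summable j Q \<Longrightarrow> moment j (mix P Q) = (moment j P + moment j Q) / 2"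
  unfolding moment_def[of j "mix P Q"] by (rule infsumI) (rule has_sum_moment_mix, auto)

lemma has_sum_sum:
  fixes f :: "'i \<Rightarrow> 'a \<Rightarrow> 'b::topological_comm_monoid_add"
  shows "finite I \<Longrightarrow> (\<And>i. i \<in> I \<Longrightarrow> (f i has_sum s i) A) \<Longrightarrow>
    ((\<lambda>x. \<Sum>i\<in>I. f i x) has_sum (\<Sum>i\<in>I. s i)) A"
proof (induction I rule: finite_induct)
  case (insert i I)
  then have "((\<lambda>x. f i x + (\<Sum>i\<in>I. f i x)) has_sum (s i + (\<Sum>i\<in>I. s i))) A"
    by (intro has_sum_add) auto
  then show ?case using insert by simp
qed simp

lemma has_sum_moment_translate:
  assumes "moments_summable n P" and "j \<le> n"
  shows "((\<lambda>k. real_of_int k ^ j * translate c P k)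
    has_sum (\<Sum>l\<le>j. of_nat (j choose l) * of_int c ^ (j - l) * moment l P)) UNIV"
proof -
  have "((\<lambda>i. \<Sum>l\<le>j. of_nat (j choose l) * of_int c ^ (j - l) * (real_of_int i ^ l * P i))
      has_sum (\<Sum>l\<le>j. of_nat (j choose l) * of_int c ^ (j - l) * moment l P)) UNIV"
    using assms(2) by (intro has_sum_sum has_sum_cmult_right has_sum_moment[OF assms(1)]) auto
  moreover have "real_of_int (i + c) ^ j * P i =
      (\<Sum>l\<le>j. of_nat (j choose l) * of_int c ^ (j - l) * (real_of_int i ^ l * P i))" for i
    by (simp add: binomial_ring sum_distrib_left sum_distrib_right mult_ac)
  ultimately have "((\<lambda>i. real_of_int (i + c) ^ j * P i)
      has_sum (\<Sum>l\<le>j. of_nat (j choose l) * of_int c ^ (j - l) * moment l P)) UNIV"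
    by simp
  moreover have "bij_betw (\<lambda>i. i + c) UNIV UNIV"
    by (rule bij_betwI[where g = "\<lambda>k. k - c"]) auto
  ultimately show ?thesis
    using has_sum_reindex_bij_betw[of "\<lambda>i. i + c" UNIV UNIV "\<lambda>k. real_of_int k ^ j * translate c P k"]
    by (simp add: translate_def)
qed

lemma moments_summable_translate: "moments_summable n P \<Longrightarrow> moments_summable n (translate c P)"
  by (rule moments_summableI) (rule has_sum_moment_translate)

lemma moment_translate:
  "moments_summable j P \<Longrightarrow>
    moment j (translate c P) = (\<Sum>l\<le>j. of_nat (j choose l) * of_int c ^ (j - l) * moment l P)"
  unfolding moment_def[of j "translate c P"] by (rule infsumI) (rule has_sum_moment_translate, auto)

lemma moment_translate_low:
  assumes "moments_summable 2 P"
  shows "moment 0 (translate c P) = moment 0 P"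
    and "moment 1 (translate c P) = moment 1 P + of_int c * moment 0 P"
    and "moment 2 (translate c P) = moment 2 P + 2 * of_int c * moment 1 P + of_int c ^ 2 * moment 0 P"
  using moment_translate[OF moments_summable_mono[OF assms], of _ c]
  by (simp_all add: numeral_2_eq_2)

lemma has_sum_moment_point_mass: "((\<lambda>k. real_of_int k ^ j * point_mass c k) has_sum of_int c ^ j) UNIV"
  by (rule has_sum_finite_neutralI[of "{c}"]) (auto simp: point_mass_def)

lemma moments_summable_point_mass: "moments_summable n (point_mass c)"
  by (rule moments_summableI) (rule has_sum_moment_point_mass)

lemma moment_point_mass: "moment j (point_mass c) = of_int c ^ j"
  unfolding moment_def by (rule infsumI) (rule has_sum_moment_point_mass)

lemma central_moment_2:
  assumes "moments_summable 2 P" and "moment 0 P = 1"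
  shows "(\<Sum>\<^sub>\<infinity>k. (real_of_int k - moment 1 P)\<^sup>2 * P k) = moment 2 P - (moment 1 P)\<^sup>2"
proof -
  let ?\<mu> = "moment 1 P"
  have "((\<lambda>k. real_of_int k ^ 2 * P k + (- 2 * ?\<mu>) * (real_of_int k ^ 1 * P k) + ?\<mu>\<^sup>2 * (real_of_int k ^ 0 * P k))
      has_sum (moment 2 P + (- 2 * ?\<mu>) * ?\<mu> + ?\<mu>\<^sup>2 * moment 0 P)) UNIV"
    using assms(1) by (intro has_sum_add has_sum_cmult_right has_sum_moment) auto
  then show ?thesis
    using assms(2) by (intro infsumI) (simp add: power2_eq_square algebra_simps)
qed

section \<open>The distributions a and b\<close>

lemma d_0: "d 0 n = 0"
  by (simp add: d_def)

lemma d_1_even: "d 1 (2 * n) = int (n mod 2)"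
  using d_odd_even[of 0 n] by (simp add: d_0)

lemma d_1_odd: "d 1 (2 * n + 1) = d 1 n - int (n mod 2)"
  using d_odd_odd[of 0 n] by simp

lemma d_1_le_1: "d 1 n \<le> 1"
proof (induction n rule: less_induct)
  case (less n)
  show ?case
  proof (cases "even n")
    case True
    then obtain m where "n = 2 * m" by blast
    then show ?thesis using d_1_even[of m] by simp
  next
    case False
    then obtain m where n: "n = 2 * m + 1" using oddE by blast
    then have "m < n" by simp
    then show ?thesis using less.IH[of m] d_1_odd[of m] n by simp
  qed
qed

lemma int_Suc_mod_2: "int (Suc s mod 2) = 1 - int (s mod 2)"
  by presburger

lemma has_distribution_d_even_even:
  assumes "has_distribution (\<lambda>n. d s (2 * n)) P" and "has_distribution (\<lambda>n. d s (2 * n + 1)) Q"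
  shows "has_distribution (\<lambda>n. d (2 * s) (2 * n)) (mix P Q)"
  using assms by (rule has_distribution_interleave) (simp_all only: d_even_even)

lemma has_distribution_d_even_odd:
  assumes "has_distribution (\<lambda>n. d s (2 * n)) P" and "has_distribution (\<lambda>n. d s (2 * n + 1)) Q"
  shows "has_distribution (\<lambda>n. d (2 * s) (2 * n + 1))
    (mix (translate (int (s mod 2)) P) (translate (- int (s mod 2)) Q))"
proof (rule has_distribution_interleave[OF has_distribution_translate[OF assms(1)]
      has_distribution_translate[OF assms(2)]])
  fix m
  show "d (2 * s) (2 * (2 * m) + 1) = d s (2 * m) + int (s mod 2)"
    unfolding d_even_odd by simp
  show "d (2 * s) (2 * (2 * m + 1) + 1) = d s (2 * m + 1) + - int (s mod 2)"
    unfolding d_even_odd by (simp add: int_Suc_mod_2)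
qed

lemma has_distribution_d_odd_even:
  assumes "has_distribution (\<lambda>n. d s (2 * n)) P" and "has_distribution (\<lambda>n. d s (2 * n + 1)) Q"
  shows "has_distribution (\<lambda>n. d (2 * s + 1) (2 * n))
    (mix (translate (int (s mod 2)) P) (translate (1 - int (s mod 2)) Q))"
proof (rule has_distribution_interleave[OF has_distribution_translate[OF assms(1)]
      has_distribution_translate[OF assms(2)]])
  fix m
  show "d (2 * s + 1) (2 * (2 * m)) = d s (2 * m) + int (s mod 2)"
    unfolding d_odd_even by simp
  show "d (2 * s + 1) (2 * (2 * m + 1)) = d s (2 * m + 1) + (1 - int (s mod 2))"
    unfolding d_odd_even by (simp add: int_Suc_mod_2)
qed

lemma has_distribution_d_odd_odd:
  assumes "has_distribution (\<lambda>n. d (s + 1) (2 * n)) P" and "has_distribution (\<lambda>n. d (s + 1) (2 * n + 1)) Q"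
  shows "has_distribution (\<lambda>n. d (2 * s + 1) (2 * n + 1)) (mix P (translate (- 1) Q))"
proof (rule has_distribution_interleave[OF assms(1) has_distribution_translate[OF assms(2)]])
  fix m
  show "d (2 * s + 1) (2 * (2 * m) + 1) = d (s + 1) (2 * m)"
    unfolding d_odd_odd by simp
  show "d (2 * s + 1) (2 * (2 * m + 1) + 1) = d (s + 1) (2 * m + 1) + - 1"
    unfolding d_odd_odd by simp
qed

lemma a_eqI: "has_distribution (\<lambda>n. d t (2 * n)) P \<Longrightarrow> a t = P"
  using density_level_sets by (fastforce simp: a_def[abs_def])

lemma b_eqI: "has_distribution (\<lambda>n. d t (2 * n + 1)) P \<Longrightarrow> b t = P"
  using density_level_sets by (fastforce simp: b_def[abs_def])

lemma has_distribution_d_0: "has_distribution (\<lambda>n. d 0 (f n)) (point_mass 0)"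
  using has_distribution_const[of 0] by (simp add: d_0)

lemma has_distribution_d_1_even: "has_distribution (\<lambda>n. d 1 (2 * n)) (mix (point_mass 0) (point_mass 1))"
  by (rule has_distribution_interleave[OF has_distribution_const has_distribution_const])
    (unfold d_1_even, simp_all)

definition b1_distribution :: "int \<Rightarrow> real" where
  "b1_distribution k = (if 1 < k then 0 else if k = 1 then 1 / 4 else 3 / 8 * (1 / 2) ^ nat (- k))"

lemma has_distribution_d_1_odd: "has_distribution (\<lambda>n. d 1 (2 * n + 1)) b1_distribution"
proof (rule has_distribution_descent[where K = 1])
  show "d 1 (2 * n + 1) \<le> 1" for n
    by (rule d_1_le_1)
  show "d 1 (2 * (2 * m + 1) + 1) = d 1 (2 * m + 1) - 1" for m
    unfolding d_1_odd by simp
  show "b1_distribution k = 0" if "1 < k" for k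
    using that by (simp add: b1_distribution_def)
  show "has_distribution (\<lambda>m. d 1 (2 * (2 * m) + 1)) (mix (point_mass 0) (point_mass 1))"
    using has_distribution_d_1_even unfolding d_1_odd by simp
  show "b1_distribution k = (mix (point_mass 0) (point_mass 1) k + b1_distribution (k + 1)) / 2"
    if k_le: "k \<le> 1" for k
  proof -
    consider "k = 1" | "k = 0" | "k \<le> - 1" using k_le by linarith
    then show ?thesis
    proof cases
      case 3
      then have "nat (- k) = Suc (nat (- (k + 1)))" by simp
      then show ?thesis using 3 by (simp add: b1_distribution_def mix_def point_mass_def)
    qed (auto simp: b1_distribution_def mix_def point_mass_def)
  qed
qed

lemma summable_square_times_half_power: "summable (\<lambda>n. (real n + 1)\<^sup>2 * (1 / 2) ^ n)"
proof (rule summable_comparison_test_bigo)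
  show "summable (\<lambda>n. norm ((3 / 4 :: real) ^ n))"
    by (simp add: summable_geometric)
  show "(\<lambda>n. (real n + 1)\<^sup>2 * (1 / 2) ^ n) \<in> O(\<lambda>n. (3 / 4) ^ n)"
    by real_asymp
qed

lemma moments_summable_b1_distribution: "moments_summable 2 b1_distribution"
  unfolding moments_summable_def
proof (intro allI impI)
  fix j :: nat
  assume "j \<le> 2"
  let ?f = "\<lambda>k. real_of_int k ^ j * b1_distribution k"
  have "norm (?f (1 - int n)) \<le> (real n + 1)\<^sup>2 * (1 / 2) ^ n" for n
  proof -
    have "\<bar>real_of_int (1 - int n)\<bar> ^ j \<le> (real n + 1) ^ j"
      by (rule power_mono) auto
    also have "\<dots> \<le> (real n + 1)\<^sup>2"
      using \<open>j \<le> 2\<close> by (intro power_increasing) simp_all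
    finally have "\<bar>real_of_int (1 - int n)\<bar> ^ j \<le> (real n + 1)\<^sup>2" .
    moreover have "0 \<le> b1_distribution (1 - int n)" and "b1_distribution (1 - int n) \<le> (1 / 2) ^ n"
      by (cases n; simp add: b1_distribution_def)+
    ultimately show ?thesis
      by (simp add: abs_mult power_abs mult_mono)
  qed
  then have "summable (\<lambda>n. norm (?f (1 - int n)))"
    by (intro summable_comparison_test'[OF summable_square_times_half_power]) simp
  then have "(\<lambda>n. ?f (1 - int n)) summable_on UNIV"
    by (rule norm_summable_imp_summable_on)
  moreover have "bij_betw (\<lambda>n. 1 - int n) UNIV {..1}"
    by (rule bij_betwI[where g = "\<lambda>k. nat (1 - k)"]) auto
  ultimately have "?f summable_on {..1}"
    using summable_on_reindex_bij_betw by blast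
  then show "?f summable_on UNIV"
    by (rule summable_on_cong_neutral[THEN iffD1, rotated -1]) (auto simp: b1_distribution_def)
qed

lemma a_0: "a 0 = point_mass 0"
  by (rule a_eqI) (rule has_distribution_d_0)

lemma b_0: "b 0 = point_mass 0"
  by (rule b_eqI) (rule has_distribution_d_0)

lemma a_1: "a 1 = mix (point_mass 0) (point_mass 1)"
  by (rule a_eqI) (rule has_distribution_d_1_even)

lemma b_1: "b 1 = b1_distribution"
  by (rule b_eqI) (rule has_distribution_d_1_odd)

lemma binary_induct [case_names zero one double double_plus1]:
  fixes t :: nat
  assumes "P 0" and "P 1"
    and "\<And>s. 1 \<le> s \<Longrightarrow> P s \<Longrightarrow> P (2 * s)"
    and "\<And>s. 1 \<le> s \<Longrightarrow> P s \<Longrightarrow> P (s + 1) \<Longrightarrow> P (2 * s + 1)"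
  shows "P t"
proof (induction t rule: less_induct)
  case (less t)
  have "t = 0 \<or> t = 1 \<or> (\<exists>s. t = 2 * s \<and> 1 \<le> s) \<or> (\<exists>s. t = 2 * s + 1 \<and> 1 \<le> s)"
    by presburger
  then show ?case
    using assms less.IH by fastforce
qed

lemma distributions_a_b:
  "has_distribution (\<lambda>n. d t (2 * n)) (a t) \<and> has_distribution (\<lambda>n. d t (2 * n + 1)) (b t)"
proof (induction t rule: binary_induct)
  case zero
  show ?case
    unfolding a_0 b_0 by (intro conjI has_distribution_d_0)
next
  case one
  show ?case
    unfolding a_1 b_1 by (intro conjI has_distribution_d_1_even has_distribution_d_1_odd)
next
  case (double s)
  then show ?case
    using a_eqI b_eqI has_distribution_d_even_even has_distribution_d_even_odd by metis
next
  case (double_plus1 s)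
  then show ?case
    using a_eqI b_eqI has_distribution_d_odd_even has_distribution_d_odd_odd by metis
qed

lemma a_double: "a (2 * s) = mix (a s) (b s)"
  using distributions_a_b[of s] by (intro a_eqI has_distribution_d_even_even) auto

lemma b_double: "b (2 * s) = mix (translate (int (s mod 2)) (a s)) (translate (- int (s mod 2)) (b s))"
  using distributions_a_b[of s] by (intro b_eqI has_distribution_d_even_odd) auto

lemma a_double_plus1:
  "a (2 * s + 1) = mix (translate (int (s mod 2)) (a s)) (translate (1 - int (s mod 2)) (b s))"
  using distributions_a_b[of s] by (intro a_eqI has_distribution_d_odd_even) auto

lemma b_double_plus1: "b (2 * s + 1) = mix (a (s + 1)) (translate (- 1) (b (s + 1)))"
  using distributions_a_b[of "s + 1"] by (intro b_eqI has_distribution_d_odd_odd) auto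

lemma moments_summable_a_b: "moments_summable 2 (a t) \<and> moments_summable 2 (b t)"
proof (induction t rule: binary_induct)
  case zero
  show ?case
    unfolding a_0 b_0 by (simp add: moments_summable_point_mass)
next
  case one
  show ?case
    unfolding a_1 b_1 by (simp add: moments_summable_b1_distribution moments_summable_mix moments_summable_point_mass)
next
  case (double s)
  then show ?case
    unfolding a_double b_double by (simp add: moments_summable_mix moments_summable_translate)
next
  case (double_plus1 s)
  then show ?case
    unfolding a_double_plus1 b_double_plus1 by (simp add: moments_summable_mix moments_summable_translate)
qed

section \<open>Means and variances\<close>

lemma moments_summable_a: "j \<le> 2 \<Longrightarrow> moments_summable j (a t)"
  and moments_summable_b: "j \<le> 2 \<Longrightarrow> moments_summable j (b t)"
  using moments_summable_a_b moments_summable_mono by blast+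

lemmas moment_rules = moment_mix moment_translate_low moments_summable_translate
  moments_summable_a moments_summable_b

(* otherwise the simplifier turns moment 1 into moment (Suc 0), which the rules above miss *)
declare One_nat_def [simp del]

lemma moments_b_double_plus1:
  "moment 0 (b (2 * s + 1)) = (moment 0 (a (s + 1)) + moment 0 (b (s + 1))) / 2"
  "moment 1 (b (2 * s + 1)) = (moment 1 (a (s + 1)) + moment 1 (b (s + 1)) - moment 0 (b (s + 1))) / 2"
  unfolding b_double_plus1 by (simp_all add: moment_rules)

lemma moment_0_1_a_b: "moment 0 (a t) = 1 \<and> moment 0 (b t) = 1 \<and> moment 1 (a t) + moment 1 (b t) = 0"
proof (induction t rule: binary_induct)
  case zero
  show ?case
    unfolding a_0 b_0 by (simp add: moment_point_mass)
next
  case one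
  \<comment> \<open>b 1 occurs on both sides of its recursion, which pins its moments down linearly\<close>
  have "moment 0 (b 1) = (moment 0 (a 1) + moment 0 (b 1)) / 2"
    and "moment 1 (b 1) = (moment 1 (a 1) + moment 1 (b 1) - moment 0 (b 1)) / 2"
    using moments_b_double_plus1[of 0] by (simp_all only: mult_0_right add_0)
  moreover have "moment 0 (a 1) = 1" and "moment 1 (a 1) = 1 / 2"
    unfolding a_1 by (simp_all add: moment_mix moments_summable_point_mass moment_point_mass)
  ultimately show ?case
    by simp
next
  case (double s)
  then show ?case
    unfolding a_double b_double by (simp add: moment_rules)
next
  case (double_plus1 s)
  then show ?case
    unfolding a_double_plus1 b_double_plus1 by (auto simp: moment_rules field_simps)
qed

lemma moment_0_a: "moment 0 (a t) = 1"
  and moment_0_b: "moment 0 (b t) = 1"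
  using moment_0_1_a_b by blast+

lemma mean_a: "moment 1 (a t) = (if odd t then 1 / 2 else 0)"
proof (cases "even t")
  case True
  then obtain s where t: "t = 2 * s" ..
  show ?thesis
    using moment_0_1_a_b[of s] unfolding t a_double by (simp add: moment_rules)
next
  case False
  then obtain s where t: "t = 2 * s + 1" using oddE by blast
  show ?thesis
    using moment_0_1_a_b[of s] unfolding t a_double_plus1 by (auto simp: moment_rules field_simps)
qed

lemma mean_b: "moment 1 (b t) = (if odd t then - 1 / 2 else 0)"
  using moment_0_1_a_b[of t] mean_a[of t] by auto

lemma m_alpha_eq: "m_alpha t = moment 1 (a t)"
  by (simp add: m_alpha_def moment_def)

lemma m_beta_eq: "m_beta t = moment 1 (b t)"
  by (simp add: m_beta_def moment_def)

lemma v_alpha_eq: "v_alpha t = moment 2 (a t) - (moment 1 (a t))\<^sup>2"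
  unfolding v_alpha_def m_alpha_eq
  using central_moment_2[OF conjunct1[OF moments_summable_a_b] moment_0_a] by simp

lemma v_beta_eq: "v_beta t = moment 2 (b t) - (moment 1 (b t))\<^sup>2"
  unfolding v_beta_def m_beta_eq
  using central_moment_2[OF conjunct2[OF moments_summable_a_b] moment_0_b] by simp

lemmas variance_rules = v_alpha_eq v_beta_eq moment_rules moment_0_a moment_0_b mean_a mean_b

lemma v_alpha_double: "v_alpha (2 * s) = (v_alpha s + v_beta s) / 2 + (if odd s then 1 / 4 else 0)"
  unfolding v_alpha_eq[of "2 * s"] a_double
  by (cases "even s") (auto simp: variance_rules power2_eq_square field_simps)

lemma v_beta_double: "v_beta (2 * s) = (v_alpha s + v_beta s) / 2 + (if odd s then 9 / 4 else 0)"
  unfolding v_beta_eq[of "2 * s"] b_double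
  by (cases "even s") (auto simp: variance_rules power2_eq_square field_simps odd_iff_mod_2_eq_one)

lemma v_alpha_double_plus1: "v_alpha (2 * s + 1) = (v_alpha s + v_beta s) / 2 + (if odd s then 1 else 1 / 4)"
  unfolding v_alpha_eq[of "2 * s + 1"] a_double_plus1
  by (cases "even s") (auto simp: variance_rules power2_eq_square field_simps odd_iff_mod_2_eq_one)

lemma v_beta_double_plus1:
  "v_beta (2 * s + 1) = (v_alpha (s + 1) + v_beta (s + 1)) / 2 + (if odd s then 1 / 4 else 1)"
  unfolding v_beta_eq[of "2 * s + 1"] b_double_plus1
  by (cases "even s") (auto simp: variance_rules power2_eq_square field_simps)

lemma v_alpha_0: "v_alpha 0 = 0" and v_beta_0: "v_beta 0 = 0"
  by (simp_all add: v_alpha_eq v_beta_eq a_0 b_0 moment_point_mass)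

lemma v_alpha_1: "v_alpha 1 = 1 / 4"
  using v_alpha_double_plus1[of 0] by (simp add: v_alpha_0 v_beta_0)

lemma v_beta_1: "v_beta 1 = 9 / 4"
proof -
  have "v_beta 1 = (v_alpha 1 + v_beta 1) / 2 + 1"
    using v_beta_double_plus1[of 0] by simp
  then show ?thesis
    unfolding v_alpha_1 by argo
qed

lemma v_alpha_2: "v_alpha 2 = 6 / 4" and v_beta_2: "v_beta 2 = 14 / 4"
  using v_alpha_double[of 1] v_beta_double[of 1] by (simp_all add: v_alpha_1 v_beta_1)

lemma exhaust_6:
  fixes i :: 6
  shows "i = 1 \<or> i = 2 \<or> i = 3 \<or> i = 4 \<or> i = 5 \<or> i = 6"
proof (induct i)
  case (of_int z)
  then have "z = 0 \<or> z = 1 \<or> z = 2 \<or> z = 3 \<or> z = 4 \<or> z = 5" by fastforce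
  then show ?case by auto
qed

lemma forall_6: "(\<forall>i::6. P i) \<longleftrightarrow> P 1 \<and> P 2 \<and> P 3 \<and> P 4 \<and> P 5 \<and> P 6"
  by (metis exhaust_6)

lemma sum_UNIV_6: "(\<Sum>i\<in>UNIV. f i) = f 1 + f 2 + f 3 + f 4 + f 5 + (f (6::6) :: 'a::comm_monoid_add)"
proof -
  have UNIV_6: "(UNIV :: 6 set) = {1, 2, 3, 4, 5, 6}" using exhaust_6 by auto
  show ?thesis unfolding UNIV_6 by (simp add: add.assoc)
qed

lemma M_eq: "M t = vector [0, 0, 1 / 2, - 1 / 2, 0, 0]"
proof -
  have "2 * t + 2 = 2 * (t + 1)" by simp
  then show ?thesis
    unfolding M_def m_alpha_eq m_beta_eq mean_a mean_b by simp
qed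

lemma V_double: "V (2 * t) = (1 / 2) *\<^sub>R (A0 *v V t) + (1 / 4) *\<^sub>R vector [0, 0, 1, 4, 1, 9]"
proof -
  have "2 * (2 * t) + 2 = 2 * (2 * t + 1)" by simp
  moreover have
    "v_alpha (2 * (2 * t)) = (v_alpha (2 * t) + v_beta (2 * t)) / 2"
    "v_beta (2 * (2 * t)) = (v_alpha (2 * t) + v_beta (2 * t)) / 2"
    "v_alpha (2 * (2 * t) + 1) = (v_alpha (2 * t) + v_beta (2 * t)) / 2 + 1 / 4"
    "v_beta (2 * (2 * t) + 1) = (v_alpha (2 * t + 1) + v_beta (2 * t + 1)) / 2 + 1"
    "v_alpha (2 * (2 * t + 1)) = (v_alpha (2 * t + 1) + v_beta (2 * t + 1)) / 2 + 1 / 4"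
    "v_beta (2 * (2 * t + 1)) = (v_alpha (2 * t + 1) + v_beta (2 * t + 1)) / 2 + 9 / 4"
    using v_alpha_double[of "2 * t"] v_beta_double[of "2 * t"] v_alpha_double_plus1[of "2 * t"]
      v_beta_double_plus1[of "2 * t"] v_alpha_double[of "2 * t + 1"] v_beta_double[of "2 * t + 1"]
    by simp_all
  ultimately show ?thesis
    unfolding V_def
    by (simp add: vec_eq_iff forall_6 vector_def A0_def matrix_vector_mult_def sum_UNIV_6)
qed

lemma V_double_plus1: "V (2 * t + 1) = (1 / 2) *\<^sub>R (A1 *v V t) + (1 / 4) *\<^sub>R vector [1, 9, 4, 1, 0, 0]"
proof -
  have "2 * (2 * t + 1) + 2 = 2 * (2 * t + 2)" and "2 * t + 2 = 2 * (t + 1)" by simp_all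
  moreover have
    "v_alpha (2 * (2 * t + 1)) = (v_alpha (2 * t + 1) + v_beta (2 * t + 1)) / 2 + 1 / 4"
    "v_beta (2 * (2 * t + 1)) = (v_alpha (2 * t + 1) + v_beta (2 * t + 1)) / 2 + 9 / 4"
    "v_alpha (2 * (2 * t + 1) + 1) = (v_alpha (2 * t + 1) + v_beta (2 * t + 1)) / 2 + 1"
    "v_beta (2 * (2 * t + 1) + 1) = (v_alpha (2 * t + 2) + v_beta (2 * t + 2)) / 2 + 1 / 4"
    "v_alpha (2 * (2 * t + 2)) = (v_alpha (2 * t + 2) + v_beta (2 * t + 2)) / 2"
    "v_beta (2 * (2 * t + 2)) = (v_alpha (2 * t + 2) + v_beta (2 * t + 2)) / 2"
    using v_alpha_double[of "2 * t + 1"] v_beta_double[of "2 * t + 1"] v_alpha_double_plus1[of "2 * t + 1"]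
      v_beta_double_plus1[of "2 * t + 1"] v_alpha_double[of "2 * t + 2"] v_beta_double[of "2 * t + 2"]
    by (simp_all add: add.assoc)
  ultimately show ?thesis
    unfolding V_def
    by (simp add: vec_eq_iff forall_6 vector_def A1_def matrix_vector_mult_def sum_UNIV_6)
qed

lemma V_0: "V 0 = (1 / 4) *\<^sub>R vector [0, 0, 1, 9, 6, 14]"
proof -
  have "V 0 = vector [v_alpha 0, v_beta 0, v_alpha 1, v_beta 1, v_alpha 2, v_beta 2]"
    by (simp add: V_def numeral_2_eq_2)
  then show ?thesis
    by (simp add: v_alpha_0 v_beta_0 v_alpha_1 v_beta_1 v_alpha_2 v_beta_2 vec_eq_iff forall_6 vector_def)
qed

theorem proposition3p4:
  fixes t :: nat
  shows "M t = vector [0, 0, 1/2, -1/2, 0, 0]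
    \<and> V (2*t) = (1/2) *\<^sub>R (A0 *v V t) + (1/4) *\<^sub>R vector [0, 0, 1, 4, 1, 9]
    \<and> V (2*t+1) = (1/2) *\<^sub>R (A1 *v V t) + (1/4) *\<^sub>R vector [1, 9, 4, 1, 0, 0]
    \<and> V 0 = (1/4) *\<^sub>R vector [0, 0, 1, 9, 6, 14]"
  by (intro conjI M_eq V_double V_double_plus1 V_0)

end
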